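(* Fix integers $2\le r\le k$, a constant $\lambda_{k-r+1}\in\mathbb R$ and a constant $\tau>0$, and let $u(n)$ satisfy $u(n)\to\infty$, $u(n)/n\to0$. Let $t=t(n)$ be integers with $0\le t\le\tau u(n)$, and define $\lambda^{(s)}_j$ as below. Then for every $j\in\{k-r+1,\dots,k\}$, $$\exp\{\lambda^{(t)}_j\}=1+\binom{j}{k-r+1}\frac{t^{\,j-k+r-1}}{n^{\,j-k+r-1}}\bigl(e^{\lambda_{k-r+1}}-1\bigr)+O\Bigl(\frac{u(n)^{j-k+r-2}}{n^{j-k+r-1}}\max\Bigl\{1,\frac{u(n)^2}{n}\Bigr\}\Bigr),$$ where the implied constant depends only on $k,r,\lambda_{k-r+1},\tau$.
   Context: Let $N(s):=n-u(n)-s$. Set $\lambda^{(s)}_{k-r+1}:=\lambda_{k-r+1}$ for all $s=0,1,\dots,t$. For $j=k-r+2,\dots,k$ set $\lambda^{(0)}_j:=0$ and, for $s=1,\dots,t$, $$\lambda^{(s)}_j:=\lambda^{(s-1)}_j+\log\Bigl(1-\frac{j}{N(t-s+1)}+\frac{j}{N(t-s+1)}\exp\{\lambda^{(s-1)}_{j-1}\}\Bigr).$$ *)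

theory Defs
  imports Complex_Main
begin

text \<open>lam m lam0 Nb t s j  is  lambda^{(s)}_j, where m = k-r+1, lam0 = lambda_{k-r+1},
  Nb = n - u(n) (so that N(s) = Nb - s), and t = t(n).
  For s = Suc s', the quantity N(t-s+1) equals Nb - (t - s').\<close>
fun lam :: "nat \<Rightarrow> real \<Rightarrow> real \<Rightarrow> nat \<Rightarrow> nat \<Rightarrow> nat \<Rightarrow> real" where
  "lam m lam0 Nb t 0 j = (if j = m then lam0 else 0)"
| "lam m lam0 Nb t (Suc s) j =
     (if j = m then lam0
      else (let N = Nb - real (t - s) in
            lam m lam0 Nb t s j
            + ln (1 - real j / N + real j / N * exp (lam m lam0 Nb t s (j - 1)))))"

end

theory Submission
  imports Defs
begin

(* Write Y_j = exp lambda_j - 1. The recursion becomes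
   Y_j^(s+1) = Y_j^(s) + (1 + Y_j^(s)) j Y_(j-1)^(s) / N  with  N = n - O(u(n)),
   and Y_m (m = k-r+1) is the constant e^lambda_m - 1. Induct on d = j - m: if
   Y_(j-1)^(s) is x (j-1 choose m) (s/n)^(d-1) up to the error of level d-1, then summing
   the recursion over the t <= tau u(n) steps gives a Riemann sum for x (j choose m) (t/n)^d,
   since j (j-1 choose m) = d (j choose m). The four errors of one step (inherited error,
   N versus n, the quadratic term Y_j Y_(j-1), and the second-order remainder of
   (s+1)^d - s^d) each sum over the t steps to a multiple of the claimed error term,
   provided u(n)/n is small enough. *)

(* For d < 2 both sides vanish: the truncated exponents d - 1 and d - 2 are harmless. *)
lemma power_Suc_sub_linear_bounds:
  fixes a :: real
  assumes "0 \<le> a"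
  shows "0 \<le> (a + 1) ^ d - a ^ d - d * a ^ (d - 1)"
    and "(a + 1) ^ d - a ^ d - d * a ^ (d - 1) \<le> (d choose 2) * (a + 1) ^ (d - 2)"
proof -
  define h where "h d = (a + 1) ^ d - a ^ d - d * a ^ (d - 1)" for d
  have h_Suc: "h (Suc d) = (a + 1) * h d + d * a ^ (d - 1)" if "d \<ge> 1" for d
  proof -
    have "a * a ^ (d - 1) = a ^ d" using that by (cases d) simp_all
    then show ?thesis unfolding h_def by (simp add: algebra_simps)
  qed
  have "0 \<le> h d \<and> h d \<le> (d choose 2) * (a + 1) ^ (d - 2)"
  proof (induction d)
    case 0
    then show ?case by (simp add: h_def)
  next
    case (Suc d)
    show ?case
    proof (cases "d = 0")
      case True
      then show ?thesis by (simp add: h_def)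
    next
      case False
      have choose: "real (Suc d choose 2) = (d choose 2) + d"
        by (simp add: numeral_2_eq_2)
      have "(a + 1) * ((d choose 2) * (a + 1) ^ (d - 2)) = (d choose 2) * (a + 1) ^ (d - 1)"
      proof (cases "d = 1")
        case False
        with \<open>d \<noteq> 0\<close> have "d - 1 = Suc (d - 2)" by arith
        then show ?thesis by simp
      qed simp
      moreover have "(a + 1) * h d \<le> (a + 1) * ((d choose 2) * (a + 1) ^ (d - 2))"
        using Suc.IH assms by (intro mult_left_mono) auto
      moreover have "d * a ^ (d - 1) \<le> d * (a + 1) ^ (d - 1)"
        using assms by (intro mult_left_mono power_mono) auto
      ultimately have "h (Suc d) \<le> (d choose 2) * (a + 1) ^ (d - 1) + d * (a + 1) ^ (d - 1)"
        using False h_Suc[of d] by linarith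
      then have "h (Suc d) \<le> (Suc d choose 2) * (a + 1) ^ (Suc d - 2)"
        unfolding choose by (simp add: distrib_right)
      moreover have "0 \<le> h (Suc d)"
        using False h_Suc[of d] Suc.IH assms by simp
      ultimately show ?thesis by simp
    qed
  qed
  then show "0 \<le> (a + 1) ^ d - a ^ d - d * a ^ (d - 1)"
    and "(a + 1) ^ d - a ^ d - d * a ^ (d - 1) \<le> (d choose 2) * (a + 1) ^ (d - 2)"
    by (simp_all add: h_def)
qed

lemma abs_le_of_increments_le:
  fixes e :: "nat \<Rightarrow> real" and \<epsilon> :: real
  assumes e_0: "e 0 = 0"
    and increment: "\<And>s. s < t \<Longrightarrow> \<bar>e s\<bar> \<le> s * \<epsilon> \<Longrightarrow> \<bar>e (Suc s) - e s\<bar> \<le> \<epsilon>"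
    and "s \<le> t"
  shows "\<bar>e s\<bar> \<le> s * \<epsilon>"
  using \<open>s \<le> t\<close>
proof (induction s)
  case 0
  then show ?case using e_0 by simp
next
  case (Suc s)
  then have "\<bar>e s\<bar> \<le> s * \<epsilon>" by simp
  moreover have "\<bar>e (Suc s) - e s\<bar> \<le> \<epsilon>"
    using Suc.prems calculation by (intro increment) auto
  ultimately show ?case by (simp add: algebra_simps)
qed

(* The error term of the theorem for j = m + d. *)
definition err_scale :: "real \<Rightarrow> real \<Rightarrow> nat \<Rightarrow> real" where
  "err_scale U n d = U powr (real d - 1) / n ^ d * max 1 (U\<^sup>2 / n)"

lemma err_scale_nonneg: "0 \<le> n \<Longrightarrow> 0 \<le> err_scale U n d"
  unfolding err_scale_def by simp

lemma err_scale_Suc_eq: "0 < U \<Longrightarrow> err_scale U n (Suc d) = U ^ d / n ^ Suc d * max 1 (U\<^sup>2 / n)"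
  unfolding err_scale_def by (simp add: powr_realpow)

lemma err_scale_Suc:
  assumes "0 < U"
  shows "err_scale U n (Suc d) = err_scale U n d * (U / n)"
proof (cases d)
  case 0
  have "U powr (real 0 - 1) * U = 1"
    using assms by (simp add: powr_minus)
  then show ?thesis
    using 0 by (simp add: err_scale_def)
next
  case (Suc e)
  then show ?thesis
    using assms by (simp add: err_scale_Suc_eq mult_ac)
qed

lemma err_scale_ge:
  assumes "0 < U" "0 \<le> n"
  shows "(U / n) ^ (d + 2) \<le> err_scale U n (Suc d)"
    and "U ^ d / n ^ Suc d \<le> err_scale U n (Suc d)"
proof -
  have "(U / n) ^ (d + 2) = U ^ d / n ^ Suc d * (U\<^sup>2 / n)"
    by (simp add: power_divide power_add power2_eq_square mult_ac)
  also have "\<dots> \<le> U ^ d / n ^ Suc d * max 1 (U\<^sup>2 / n)"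
    using assms by (intro mult_left_mono) auto
  finally show "(U / n) ^ (d + 2) \<le> err_scale U n (Suc d)"
    using assms by (simp add: err_scale_Suc_eq)
  show "U ^ d / n ^ Suc d \<le> err_scale U n (Suc d)"
    using assms mult_left_mono[of 1 "max 1 (U\<^sup>2 / n)" "U ^ d / n ^ Suc d"]
    by (simp add: err_scale_Suc_eq)
qed

lemma err_scale_le_power:
  assumes "1 \<le> U" "U \<le> n"
  shows "err_scale U n d \<le> (U / n) ^ d"
proof (induction d)
  case 0
  have "max 1 (U\<^sup>2 / n) \<le> U"
    using assms by (auto simp: field_simps power2_eq_square)
  moreover have "U powr (real 0 - 1) = 1 / U"
    using assms by (simp add: powr_minus divide_inverse)
  ultimately show ?case
    using assms by (simp add: err_scale_def)
next
  case (Suc d)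
  have "err_scale U n d * (U / n) \<le> (U / n) ^ d * (U / n)"
    using Suc.IH assms by (intro mult_right_mono) auto
  then show ?case
    using assms by (simp add: err_scale_Suc mult.commute)
qed

lemma lam_base [simp]: "lam m lam0 Nb t s m = lam0"
  by (cases s) simp_all

lemma exp_lam_Suc:
  assumes "j \<noteq> m" "0 < j" "real j \<le> Nb - real (t - s)"
  shows "exp (lam m lam0 Nb t (Suc s) j) = exp (lam m lam0 Nb t s j)
           * (1 + j / (Nb - real (t - s)) * (exp (lam m lam0 Nb t s (j - 1)) - 1))"
proof -
  define N where "N = Nb - real (t - s)"
  define E where "E = exp (lam m lam0 Nb t s (j - 1))"
  have "0 < N"
    using assms unfolding N_def by linarith
  then have "0 \<le> 1 - j / N" "0 < j / N * E"
    using assms unfolding N_def E_def by simp_all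
  then have pos: "0 < 1 - j / N + j / N * E"
    by linarith
  have "lam m lam0 Nb t (Suc s) j = lam m lam0 Nb t s j + ln (1 - j / N + j / N * E)"
    using assms(1) by (simp add: Let_def N_def E_def)
  then have "exp (lam m lam0 Nb t (Suc s) j) = exp (lam m lam0 Nb t s j) * (1 + j / N * (E - 1))"
    using pos by (simp add: exp_add right_diff_distrib)
  then show ?thesis
    unfolding N_def E_def .
qed

(* One step d -> d + 1 of the induction: y s and z s stand for Y_(m+d+1) and Y_(m+d) after
   s rounds of the recursion, c = m + d + 1, Cb = (m + d choose m), C = (m + d + 1 choose m),
   and Bp is the error scale of level d. *)
locale level_step =
  fixes n U \<tau> c x Cb C K' Bp :: real and t d :: nat and y z N :: "nat \<Rightarrow> real"
  assumes U_ge_1: "1 \<le> U" and tau_pos: "0 < \<tau>" and U_le: "(1 + \<tau>) * U \<le> n / 2"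
    and t_le: "t \<le> \<tau> * U"
    and c_nonneg: "0 \<le> c" and coeff_rel: "c * Cb = Suc d * C"
    and Cb_nonneg: "0 \<le> Cb" and C_nonneg: "0 \<le> C" and K'_nonneg: "0 \<le> K'"
    and Bp_nonneg: "0 \<le> Bp" and Bp_le: "Bp \<le> (U / n) ^ d"
    and N_close: "\<And>s. s < t \<Longrightarrow> \<bar>n - N s\<bar> \<le> (1 + \<tau>) * U"
    and y_0: "y 0 = 0"
    and y_Suc: "\<And>s. s < t \<Longrightarrow> y (Suc s) = y s + (1 + y s) * c * z s / N s"
    and z_approx: "\<And>s. s \<le> t \<Longrightarrow> \<bar>z s - x * Cb * (s / n) ^ d\<bar> \<le> K' * Bp"
    and step_small: "4 * c * (\<bar>x\<bar> * Cb * \<tau> ^ d + K') * \<tau> * (U / n) \<le> 1"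
begin

abbreviation q where "q \<equiv> U / n"

abbreviation Z where "Z \<equiv> \<bar>x\<bar> * Cb * \<tau> ^ d + K'"

lemma U_le_n: "U \<le> n / 2"
proof -
  have "U \<le> (1 + \<tau>) * U"
    using U_ge_1 tau_pos by (simp add: algebra_simps)
  then show ?thesis
    using U_le by linarith
qed

lemma n_pos: "0 < n"
  using U_le_n U_ge_1 by linarith

lemma q_pos: "0 < q"
  using U_ge_1 n_pos by simp

lemma q_le_1: "q \<le> 1"
  using U_le_n n_pos by simp

lemma Z_nonneg: "0 \<le> Z"
  using Cb_nonneg K'_nonneg tau_pos by simp

lemma ratio_le: "s \<le> t \<Longrightarrow> s / n \<le> \<tau> * q"
  using t_le n_pos by (simp add: field_simps)

lemma leading_term_le: "s \<le> t \<Longrightarrow> \<bar>x * Cb * (s / n) ^ d\<bar> \<le> \<bar>x\<bar> * Cb * \<tau> ^ d * q ^ d"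
proof -
  assume "s \<le> t"
  have "(s / n) ^ d \<le> (\<tau> * q) ^ d"
    using ratio_le[OF \<open>s \<le> t\<close>] n_pos by (intro power_mono) auto
  then have "\<bar>x\<bar> * Cb * (s / n) ^ d \<le> \<bar>x\<bar> * Cb * (\<tau> * q) ^ d"
    using Cb_nonneg by (intro mult_left_mono) auto
  moreover have "\<bar>x * Cb * (s / n) ^ d\<bar> = \<bar>x\<bar> * Cb * (s / n) ^ d"
    using Cb_nonneg n_pos by (simp add: abs_mult)
  ultimately show ?thesis
    by (simp only: power_mult_distrib mult.assoc)
qed

lemma z_le: "s \<le> t \<Longrightarrow> \<bar>z s\<bar> \<le> Z * q ^ d"
proof -
  assume "s \<le> t"
  have "K' * Bp \<le> K' * q ^ d"
    using Bp_le K'_nonneg by (intro mult_left_mono)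
  then show ?thesis
    using z_approx[OF \<open>s \<le> t\<close>] leading_term_le[OF \<open>s \<le> t\<close>] by (simp add: distrib_right)
qed

lemma N_ge: "s < t \<Longrightarrow> n / 2 \<le> N s"
  using N_close[of s] U_le by simp

lemma inv_N_le: "s < t \<Longrightarrow> 1 / N s \<le> 2 / n"
  using N_ge[of s] n_pos by (simp add: field_simps)

lemma inv_N_diff_le: "s < t \<Longrightarrow> \<bar>1 / N s - 1 / n\<bar> \<le> 2 * (1 + \<tau>) * U / n\<^sup>2"
proof -
  assume "s < t"
  have "0 < N s"
    using N_ge[OF \<open>s < t\<close>] n_pos by simp
  then have "\<bar>1 / N s - 1 / n\<bar> = \<bar>n - N s\<bar> * (1 / N s) / n"
    using n_pos by (simp add: field_simps abs_div)
  also have "\<dots> \<le> (1 + \<tau>) * U * (2 / n) / n"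
    using N_close[OF \<open>s < t\<close>] inv_N_le[OF \<open>s < t\<close>] \<open>0 < N s\<close> n_pos
    by (intro divide_right_mono mult_mono) auto
  finally show ?thesis
    by (simp add: power2_eq_square algebra_simps)
qed

lemma q_power_le_1: "q ^ k \<le> 1"
  using q_pos q_le_1 by (simp add: power_le_one)

lemma q_power_Suc_le: "q ^ Suc k \<le> q"
  unfolding power_Suc by (rule mult_left_le[OF q_power_le_1]) (use q_pos in simp)

lemma crude_bound_le_1: "4 * c * Z * \<tau> * q ^ Suc d \<le> 1"
proof -
  have "4 * c * Z * \<tau> * q ^ Suc d \<le> 4 * c * Z * \<tau> * q"
    using q_power_Suc_le[of d] c_nonneg Z_nonneg tau_pos by (intro mult_left_mono) auto
  then show ?thesis
    using step_small by simp
qed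

lemma crude_bound_nonneg: "0 \<le> 4 * c * Z * \<tau> * q ^ Suc d"
  using c_nonneg Z_nonneg tau_pos q_pos by (intro mult_nonneg_nonneg zero_le_power) auto

(* An a priori bound, needed only to control the quadratic term y s * z s. *)
lemma y_crude_bound: "s \<le> t \<Longrightarrow> \<bar>y s\<bar> \<le> 4 * c * Z * \<tau> * q ^ Suc d"
proof -
  define \<epsilon> where "\<epsilon> = 4 * c * Z * q ^ d / n"
  have "0 \<le> \<epsilon>"
    unfolding \<epsilon>_def using c_nonneg Z_nonneg q_pos n_pos by simp
  have t_\<epsilon>: "t * \<epsilon> \<le> 4 * c * Z * \<tau> * q ^ Suc d"
  proof -
    have "t * \<epsilon> = 4 * c * Z * q ^ d * (t / n)"
      unfolding \<epsilon>_def by simp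
    also have "\<dots> \<le> 4 * c * Z * q ^ d * (\<tau> * q)"
      using ratio_le[of t] c_nonneg Z_nonneg q_pos by (intro mult_left_mono) auto
    finally show ?thesis
      by (simp add: mult_ac)
  qed
  assume "s \<le> t"
  have "\<bar>y s\<bar> \<le> s * \<epsilon>"
  proof (rule abs_le_of_increments_le[where e = y, OF y_0 _ \<open>s \<le> t\<close>])
    fix s
    assume "s < t" and y_s: "\<bar>y s\<bar> \<le> s * \<epsilon>"
    have "s * \<epsilon> \<le> t * \<epsilon>"
      using \<open>s < t\<close> \<open>0 \<le> \<epsilon>\<close> by (intro mult_right_mono) auto
    then have "\<bar>1 + y s\<bar> \<le> 2"
      using y_s t_\<epsilon> crude_bound_le_1 by linarith
    have "0 < N s"
      using N_ge[OF \<open>s < t\<close>] n_pos by simp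
    then have "\<bar>y (Suc s) - y s\<bar> = \<bar>1 + y s\<bar> * c * \<bar>z s\<bar> * (1 / N s)"
      using y_Suc[OF \<open>s < t\<close>] c_nonneg by (simp add: abs_mult)
    also have "\<dots> \<le> 2 * c * (Z * q ^ d) * (2 / n)"
      using \<open>\<bar>1 + y s\<bar> \<le> 2\<close> z_le[of s] \<open>s < t\<close> inv_N_le[OF \<open>s < t\<close>] \<open>0 < N s\<close> c_nonneg
      by (intro mult_mono) auto
    also have "\<dots> = \<epsilon>"
      unfolding \<epsilon>_def by simp
    finally show "\<bar>y (Suc s) - y s\<bar> \<le> \<epsilon>" .
  qed
  also have "s * \<epsilon> \<le> t * \<epsilon>"
    using \<open>s \<le> t\<close> \<open>0 \<le> \<epsilon>\<close> by (intro mult_right_mono) auto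
  finally show ?thesis
    using t_\<epsilon> by linarith
qed

lemma increment_decomposition:
  assumes "s < t"
  shows "(y (Suc s) - x * C * (Suc s / n) ^ Suc d) - (y s - x * C * (s / n) ^ Suc d)
    = c * (z s - x * Cb * (s / n) ^ d) / N s + c * (x * Cb * (s / n) ^ d) * (1 / N s - 1 / n)
      + y s * c * z s / N s
      - x * C * ((real s + 1) ^ Suc d - real s ^ Suc d - Suc d * real s ^ d) / n ^ Suc d"
proof -
  have "0 < N s"
    using N_ge[OF assms] n_pos by simp
  \<comment> \<open>the main term is the linear part of the increment of x * C * (s / n) ^ Suc d\<close>
  have "c * (x * Cb * (s / n) ^ d) / n = x * (c * Cb) * real s ^ d / n ^ Suc d"
    by (simp add: power_divide mult_ac)
  also have "\<dots> = x * (Suc d * C) * real s ^ d / n ^ Suc d"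
    by (simp only: coeff_rel)
  finally have main: "c * (x * Cb * (s / n) ^ d) / n = x * C * (Suc d * real s ^ d) / n ^ Suc d"
    by (simp only: mult_ac)
  have f_diff: "x * C * (Suc s / n) ^ Suc d - x * C * (s / n) ^ Suc d
      = x * C * ((real s + 1) ^ Suc d - real s ^ Suc d) / n ^ Suc d"
    by (simp add: power_divide diff_divide_distrib right_diff_distrib add.commute)
  have "(1 + y s) * c * z s / N s = c * (z s - x * Cb * (s / n) ^ d) / N s
      + c * (x * Cb * (s / n) ^ d) * (1 / N s - 1 / n) + y s * c * z s / N s
      + c * (x * Cb * (s / n) ^ d) / n"
    using \<open>0 < N s\<close> n_pos by (simp add: field_simps)
  moreover have "x * C * ((real s + 1) ^ Suc d - real s ^ Suc d) / n ^ Suc d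
      = x * C * ((real s + 1) ^ Suc d - real s ^ Suc d - Suc d * real s ^ d) / n ^ Suc d
        + x * C * (Suc d * real s ^ d) / n ^ Suc d"
    by (simp only: diff_divide_distrib right_diff_distrib)
  ultimately show ?thesis
    using y_Suc[OF assms] main f_diff by linarith
qed

lemma quadratic_term_le:
  assumes "s < t"
  shows "\<bar>y s * c * z s / N s\<bar> \<le> 8 * c\<^sup>2 * Z\<^sup>2 * \<tau> * q ^ Suc d / n"
proof -
  have "s \<le> t" "0 < N s"
    using assms N_ge[OF assms] n_pos by simp_all
  have "\<bar>z s\<bar> \<le> Z"
    using z_le[OF \<open>s \<le> t\<close>] q_power_le_1[of d] Z_nonneg mult_left_mono[of "q ^ d" 1 Z] by simp
  have "\<bar>y s * c * z s / N s\<bar> = \<bar>y s\<bar> * c * \<bar>z s\<bar> * (1 / N s)"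
    using c_nonneg \<open>0 < N s\<close> by (simp add: abs_mult)
  also have "\<dots> \<le> (4 * c * Z * \<tau> * q ^ Suc d) * c * Z * (2 / n)"
    using y_crude_bound[OF \<open>s \<le> t\<close>] \<open>\<bar>z s\<bar> \<le> Z\<close> inv_N_le[OF assms] \<open>0 < N s\<close> c_nonneg
      mult_nonneg_nonneg[OF crude_bound_nonneg c_nonneg]
      mult_nonneg_nonneg[OF mult_nonneg_nonneg[OF crude_bound_nonneg c_nonneg] Z_nonneg]
    by (intro mult_mono) auto
  also have "\<dots> = 8 * c\<^sup>2 * Z\<^sup>2 * \<tau> * q ^ Suc d / n"
    by (simp only: power2_eq_square) simp
  finally show ?thesis .
qed

lemma remainder_term_le:
  assumes "s < t"
  shows "\<bar>x * C * ((real s + 1) ^ Suc d - real s ^ Suc d - Suc d * real s ^ d) / n ^ Suc d\<bar>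
    \<le> \<bar>x\<bar> * C * (Suc d choose 2) * t ^ (d - 1) / n ^ Suc d"
proof -
  define h where "h = (real s + 1) ^ Suc d - real s ^ Suc d - Suc d * real s ^ d"
  have "0 \<le> h" "h \<le> (Suc d choose 2) * (real s + 1) ^ (d - 1)"
    using power_Suc_sub_linear_bounds[of "real s" "Suc d"] unfolding h_def by simp_all
  moreover have "(real s + 1) ^ (d - 1) \<le> real t ^ (d - 1)"
    using assms by (intro power_mono) auto
  ultimately have "\<bar>h\<bar> \<le> (Suc d choose 2) * real t ^ (d - 1)"
    by (smt (verit) mult_left_mono of_nat_0_le_iff)
  then show ?thesis
    using C_nonneg n_pos unfolding h_def[symmetric]
    by (simp add: abs_mult divide_right_mono mult_left_mono mult.assoc)
qed

lemma increment_le: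
  assumes "s < t"
  shows "\<bar>(y (Suc s) - x * C * (Suc s / n) ^ Suc d) - (y s - x * C * (s / n) ^ Suc d)\<bar>
    \<le> 2 * c * Z * Bp / n + 2 * c * (1 + \<tau>) * U * Z * q ^ d / n\<^sup>2
      + 8 * c\<^sup>2 * Z\<^sup>2 * \<tau> * q ^ Suc d / n
      + \<bar>x\<bar> * C * (Suc d choose 2) * t ^ (d - 1) / n ^ Suc d"
proof -
  define g where "g = x * Cb * (s / n) ^ d"
  have "s \<le> t" "0 < N s"
    using assms N_ge[OF assms] n_pos by simp_all
  have "0 \<le> K' * q ^ d"
    using K'_nonneg q_pos by simp
  then have g_le: "\<bar>g\<bar> \<le> Z * q ^ d"
    using leading_term_le[OF \<open>s \<le> t\<close>] unfolding g_def distrib_right by linarith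
  have "\<bar>c * (z s - g) / N s\<bar> = c * \<bar>z s - g\<bar> * (1 / N s)"
    using c_nonneg \<open>0 < N s\<close> by (simp add: abs_mult)
  also have "\<dots> \<le> c * (Z * Bp) * (2 / n)"
    using z_approx[OF \<open>s \<le> t\<close>] K'_nonneg Bp_nonneg Cb_nonneg tau_pos c_nonneg inv_N_le[OF assms]
      \<open>0 < N s\<close> mult_right_mono[of K' Z Bp]
    unfolding g_def by (intro mult_mono mult_left_mono) auto
  finally have inherited: "\<bar>c * (z s - g) / N s\<bar> \<le> 2 * c * Z * Bp / n"
    by (simp add: mult_ac)
  have "\<bar>c * g * (1 / N s - 1 / n)\<bar> = c * \<bar>g\<bar> * \<bar>1 / N s - 1 / n\<bar>"
    using c_nonneg by (simp add: abs_mult)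
  also have "\<dots> \<le> c * (Z * q ^ d) * (2 * (1 + \<tau>) * U / n\<^sup>2)"
    using g_le inv_N_diff_le[OF assms] c_nonneg by (intro mult_mono mult_left_mono) auto
  finally have denominator: "\<bar>c * g * (1 / N s - 1 / n)\<bar> \<le> 2 * c * (1 + \<tau>) * U * Z * q ^ d / n\<^sup>2"
    by (simp add: mult_ac)
  show ?thesis
    using increment_decomposition[OF assms] inherited denominator
      quadratic_term_le[OF assms] remainder_term_le[OF assms]
    unfolding g_def by (smt (verit))
qed

lemma steps_times_le:
  assumes "0 \<le> a"
  shows "t * (a / n) \<le> a * (\<tau> * q)"
proof -
  have "t * (a / n) = a * (t / n)"
    by simp
  also have "\<dots> \<le> a * (\<tau> * q)"
    using ratio_le[of t] assms by (rule mult_left_mono) simp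
  finally show ?thesis .
qed

lemma choose_times_power_le: "real t * ((Suc d choose 2) * real t ^ (d - 1)) \<le> (Suc d choose 2) * (\<tau> * U) ^ d"
proof -
  have "real t * ((Suc d choose 2) * real t ^ (d - 1)) = (Suc d choose 2) * real t ^ d"
    by (cases d) simp_all
  also have "\<dots> \<le> (Suc d choose 2) * (\<tau> * U) ^ d"
    using t_le by (intro mult_left_mono power_mono) auto
  finally show ?thesis .
qed

lemma steps_times_increment_le:
  "t * (2 * c * Z * Bp / n + 2 * c * (1 + \<tau>) * U * Z * q ^ d / n\<^sup>2
      + 8 * c\<^sup>2 * Z\<^sup>2 * \<tau> * q ^ Suc d / n
      + \<bar>x\<bar> * C * (Suc d choose 2) * t ^ (d - 1) / n ^ Suc d)
    \<le> 2 * c * \<tau> * Z * (Bp * q)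
      + (2 * c * \<tau> * (1 + \<tau>) * Z + 8 * c\<^sup>2 * \<tau>\<^sup>2 * Z\<^sup>2) * q ^ (d + 2)
      + \<bar>x\<bar> * C * (Suc d choose 2) * \<tau> ^ d * (U ^ d / n ^ Suc d)"
proof -
  define e1 where "e1 = 2 * c * Z * Bp"
  define e2 where "e2 = 2 * c * (1 + \<tau>) * Z * q ^ Suc d"
  define e3 where "e3 = 8 * c\<^sup>2 * Z\<^sup>2 * \<tau> * q ^ Suc d"
  have "0 \<le> e1" "0 \<le> e2" "0 \<le> e3"
    unfolding e1_def e2_def e3_def using c_nonneg Z_nonneg Bp_nonneg tau_pos q_pos U_ge_1 n_pos
    by (auto intro!: mult_nonneg_nonneg divide_nonneg_nonneg zero_le_power)
  have "t * (\<bar>x\<bar> * C * (Suc d choose 2) * t ^ (d - 1) / n ^ Suc d)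
      = \<bar>x\<bar> * C * (t * ((Suc d choose 2) * real t ^ (d - 1))) / n ^ Suc d"
    by (simp add: mult_ac)
  also have "\<dots> \<le> \<bar>x\<bar> * C * ((Suc d choose 2) * (\<tau> * U) ^ d) / n ^ Suc d"
    using choose_times_power_le C_nonneg n_pos by (intro divide_right_mono mult_left_mono) auto
  finally have remainder: "t * (\<bar>x\<bar> * C * (Suc d choose 2) * t ^ (d - 1) / n ^ Suc d)
      \<le> \<bar>x\<bar> * C * ((Suc d choose 2) * (\<tau> * U) ^ d) / n ^ Suc d" .
  have "t * (2 * c * Z * Bp / n + 2 * c * (1 + \<tau>) * U * Z * q ^ d / n\<^sup>2
      + 8 * c\<^sup>2 * Z\<^sup>2 * \<tau> * q ^ Suc d / n
      + \<bar>x\<bar> * C * (Suc d choose 2) * t ^ (d - 1) / n ^ Suc d)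
      = t * (e1 / n) + t * (e2 / n) + t * (e3 / n)
        + t * (\<bar>x\<bar> * C * (Suc d choose 2) * t ^ (d - 1) / n ^ Suc d)"
  proof -
    have "e2 / n = 2 * c * (1 + \<tau>) * U * Z * q ^ d / n\<^sup>2"
      unfolding e2_def by (simp add: power2_eq_square mult_ac)
    then show ?thesis
      unfolding e1_def e3_def by (simp add: distrib_left mult.assoc)
  qed
  also have "\<dots> \<le> e1 * (\<tau> * q) + e2 * (\<tau> * q) + e3 * (\<tau> * q)
      + \<bar>x\<bar> * C * ((Suc d choose 2) * (\<tau> * U) ^ d) / n ^ Suc d"
    using steps_times_le \<open>0 \<le> e1\<close> \<open>0 \<le> e2\<close> \<open>0 \<le> e3\<close> remainder by (intro add_mono) auto
  also have "\<dots> = 2 * c * \<tau> * Z * (Bp * q)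
      + (2 * c * \<tau> * (1 + \<tau>) * Z + 8 * c\<^sup>2 * \<tau>\<^sup>2 * Z\<^sup>2) * q ^ (d + 2)
      + \<bar>x\<bar> * C * (Suc d choose 2) * \<tau> ^ d * (U ^ d / n ^ Suc d)"
    unfolding e1_def e2_def e3_def power_mult_distrib
    by (simp only: power2_eq_square power_add power_Suc) (simp add: algebra_simps)
  finally show ?thesis .
qed

lemma y_approx:
  assumes "s \<le> t"
  shows "\<bar>y s - x * C * (s / n) ^ Suc d\<bar> \<le> 2 * c * \<tau> * Z * (Bp * q)
    + (2 * c * \<tau> * (1 + \<tau>) * Z + 8 * c\<^sup>2 * \<tau>\<^sup>2 * Z\<^sup>2) * q ^ (d + 2)
    + \<bar>x\<bar> * C * (Suc d choose 2) * \<tau> ^ d * (U ^ d / n ^ Suc d)"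
proof -
  define \<epsilon> where "\<epsilon> = 2 * c * Z * Bp / n + 2 * c * (1 + \<tau>) * U * Z * q ^ d / n\<^sup>2
      + 8 * c\<^sup>2 * Z\<^sup>2 * \<tau> * q ^ Suc d / n
      + \<bar>x\<bar> * C * (Suc d choose 2) * t ^ (d - 1) / n ^ Suc d"
  have "0 \<le> \<epsilon>"
    unfolding \<epsilon>_def using c_nonneg Z_nonneg Bp_nonneg tau_pos q_pos U_ge_1 C_nonneg n_pos
    by (auto intro!: add_nonneg_nonneg mult_nonneg_nonneg divide_nonneg_nonneg zero_le_power)
  have "\<bar>y s - x * C * (s / n) ^ Suc d\<bar> \<le> s * \<epsilon>"
    using y_0 increment_le unfolding \<epsilon>_def by (intro abs_le_of_increments_le[OF _ _ assms]) simp_all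
  also have "\<dots> \<le> t * \<epsilon>"
    using assms \<open>0 \<le> \<epsilon>\<close> by (intro mult_right_mono) auto
  also have "\<dots> \<le> 2 * c * \<tau> * Z * (Bp * q)
    + (2 * c * \<tau> * (1 + \<tau>) * Z + 8 * c\<^sup>2 * \<tau>\<^sup>2 * Z\<^sup>2) * q ^ (d + 2)
    + \<bar>x\<bar> * C * (Suc d choose 2) * \<tau> ^ d * (U ^ d / n ^ Suc d)"
    unfolding \<epsilon>_def by (rule steps_times_increment_le)
  finally show ?thesis .
qed

end

lemma level_step_lam:
  fixes n U \<tau> K' Bp lam0 x :: real
  defines "x \<equiv> exp lam0 - 1"
  assumes U_ge_1: "1 \<le> U" and "0 < \<tau>" and U_le: "(1 + \<tau>) * U \<le> n / 2"
    and j_le: "real (m + Suc d) \<le> n / 2" and t_le: "t \<le> \<tau> * U"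
    and "0 \<le> K'" "0 \<le> Bp" "Bp \<le> (U / n) ^ d"
    and "4 * real (m + Suc d) * (\<bar>x\<bar> * ((m + d) choose m) * \<tau> ^ d + K') * \<tau> * (U / n) \<le> 1"
    and prev: "\<And>s. s \<le> t \<Longrightarrow>
      \<bar>exp (lam m lam0 (n - U) t s (m + d)) - 1 - x * ((m + d) choose m) * (s / n) ^ d\<bar> \<le> K' * Bp"
  shows "level_step n U \<tau> (m + Suc d) x ((m + d) choose m) ((m + Suc d) choose m) K' Bp t d
           (\<lambda>s. exp (lam m lam0 (n - U) t s (m + Suc d)) - 1)
           (\<lambda>s. exp (lam m lam0 (n - U) t s (m + d)) - 1)
           (\<lambda>s. n - U - real (t - s))"
proof
  have "(m + Suc d) * ((m + d) choose m) = Suc d * ((m + Suc d) choose m)"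
    using binomial_absorb_comp[of "m + Suc d" m] by simp
  then show "real (m + Suc d) * ((m + d) choose m) = real (Suc d) * ((m + Suc d) choose m)"
    by (metis of_nat_mult)
  fix s
  assume "s < t"
  have "real (t - s) \<le> \<tau> * U"
    using \<open>s < t\<close> t_le by linarith
  then show "\<bar>n - (n - U - real (t - s))\<bar> \<le> (1 + \<tau>) * U"
    using U_ge_1 by (simp add: algebra_simps)
  have "real (m + Suc d) \<le> n - U - real (t - s)"
    using \<open>real (t - s) \<le> \<tau> * U\<close> U_le j_le by (simp add: algebra_simps)
  then show "exp (lam m lam0 (n - U) t (Suc s) (m + Suc d)) - 1
      = exp (lam m lam0 (n - U) t s (m + Suc d)) - 1
        + (1 + (exp (lam m lam0 (n - U) t s (m + Suc d)) - 1)) * real (m + Suc d)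
          * (exp (lam m lam0 (n - U) t s (m + d)) - 1) / (n - U - real (t - s))"
    using exp_lam_Suc[where j = "m + Suc d" and m = m and Nb = "n - U"] by (simp add: algebra_simps)
qed (use assms in \<open>auto simp: x_def\<close>)

lemma eventually_mult_le_of_nat:
  fixes u :: "nat \<Rightarrow> real"
  assumes "(\<lambda>n. u n / real n) \<longlonglongrightarrow> 0"
  shows "\<forall>\<^sub>F n in sequentially. a * u n \<le> real n"
proof -
  have "\<forall>\<^sub>F n in sequentially. a * (u n / real n) < 1"
    using tendsto_mult_right_zero[OF assms, of a] by (rule order_tendstoD) simp
  then show ?thesis
    using eventually_ge_at_top[of 1]
    by eventually_elim (simp add: field_simps)
qed

lemma exp_lam_level_bound:
  fixes n U \<tau> K' lam0 x c Z :: real and m d t s :: nat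
  defines "x \<equiv> exp lam0 - 1" and "c \<equiv> real (m + Suc d)"
    and "Z \<equiv> \<bar>x\<bar> * ((m + d) choose m) * \<tau> ^ d + K'"
  assumes U_ge_1: "1 \<le> U" and tau_pos: "0 < \<tau>" and K'_nonneg: "0 \<le> K'"
    and n_ge_U: "2 * (1 + \<tau>) * U \<le> n" and n_ge_c: "2 * c \<le> n" and n_ge_Z: "4 * c * Z * \<tau> * U \<le> n"
    and "t \<le> \<tau> * U" "s \<le> t"
    and prev: "\<And>s. s \<le> t \<Longrightarrow> \<bar>exp (lam m lam0 (n - U) t s (m + d)) - 1
      - x * ((m + d) choose m) * (s / n) ^ d\<bar> \<le> K' * err_scale U n d"
  shows "\<bar>exp (lam m lam0 (n - U) t s (m + Suc d)) - 1 - x * ((m + Suc d) choose m) * (s / n) ^ Suc d\<bar>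
    \<le> (2 * c * \<tau> * Z + (2 * c * \<tau> * (1 + \<tau>) * Z + 8 * c\<^sup>2 * \<tau>\<^sup>2 * Z\<^sup>2)
        + \<bar>x\<bar> * ((m + Suc d) choose m) * (Suc d choose 2) * \<tau> ^ d) * err_scale U n (Suc d)"
proof -
  define E where "E = err_scale U n (Suc d)"
  have "0 < n"
    using n_ge_c unfolding c_def by simp
  have "0 \<le> \<tau> * U" "0 \<le> Z"
    using U_ge_1 tau_pos K'_nonneg unfolding Z_def by simp_all
  then have "U \<le> n"
    using U_ge_1 n_ge_U by (simp add: algebra_simps)
  have "level_step n U \<tau> c x ((m + d) choose m) ((m + Suc d) choose m) K' (err_scale U n d) t d
      (\<lambda>s. exp (lam m lam0 (n - U) t s (m + Suc d)) - 1)
      (\<lambda>s. exp (lam m lam0 (n - U) t s (m + d)) - 1) (\<lambda>s. n - U - real (t - s))"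
    unfolding c_def x_def
  proof (rule level_step_lam)
    show "4 * real (m + Suc d) * (\<bar>exp lam0 - 1\<bar> * ((m + d) choose m) * \<tau> ^ d + K') * \<tau> * (U / n) \<le> 1"
      using n_ge_Z \<open>0 < n\<close> by (simp add: c_def x_def Z_def field_simps)
  qed (use assms \<open>0 < n\<close> \<open>U \<le> n\<close> in \<open>auto simp: err_scale_nonneg err_scale_le_power algebra_simps\<close>)
  from level_step.y_approx[OF this \<open>s \<le> t\<close>]
  have "\<bar>exp (lam m lam0 (n - U) t s (m + Suc d)) - 1 - x * ((m + Suc d) choose m) * (s / n) ^ Suc d\<bar>
      \<le> 2 * c * \<tau> * Z * (err_scale U n d * (U / n))
        + (2 * c * \<tau> * (1 + \<tau>) * Z + 8 * c\<^sup>2 * \<tau>\<^sup>2 * Z\<^sup>2) * (U / n) ^ (d + 2)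
        + \<bar>x\<bar> * ((m + Suc d) choose m) * (Suc d choose 2) * \<tau> ^ d * (U ^ d / n ^ Suc d)"
    unfolding Z_def .
  also have "\<dots> \<le> 2 * c * \<tau> * Z * E + (2 * c * \<tau> * (1 + \<tau>) * Z + 8 * c\<^sup>2 * \<tau>\<^sup>2 * Z\<^sup>2) * E
      + \<bar>x\<bar> * ((m + Suc d) choose m) * (Suc d choose 2) * \<tau> ^ d * E"
    using err_scale_Suc[of U n d] err_scale_ge[of U n d] U_ge_1 tau_pos \<open>0 < n\<close> \<open>0 \<le> Z\<close>
    unfolding E_def c_def by (intro add_mono mult_left_mono) auto
  finally show ?thesis
    unfolding E_def by (simp add: algebra_simps)
qed

lemma exp_lam_approx:
  fixes m d :: nat and lam0 \<tau> :: real and u :: "nat \<Rightarrow> real"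
  assumes "0 < \<tau>" "filterlim u at_top sequentially" "(\<lambda>n. u n / real n) \<longlonglongrightarrow> 0"
  shows "\<exists>K\<ge>0. \<forall>\<^sub>F n in sequentially. \<forall>t. real t \<le> \<tau> * u n \<longrightarrow> (\<forall>s\<le>t.
           \<bar>exp (lam m lam0 (real n - u n) t s (m + d)) - 1
              - (exp lam0 - 1) * ((m + d) choose m) * (s / n) ^ d\<bar>
           \<le> K * err_scale (u n) n d)"
proof (induction d)
  case 0
  show ?case
    by (intro exI[of _ 0]) simp
next
  case (Suc d)
  then obtain K' where "0 \<le> K'" and prev: "\<forall>\<^sub>F n in sequentially. \<forall>t. real t \<le> \<tau> * u n \<longrightarrow>
      (\<forall>s\<le>t. \<bar>exp (lam m lam0 (real n - u n) t s (m + d)) - 1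
         - (exp lam0 - 1) * ((m + d) choose m) * (s / n) ^ d\<bar> \<le> K' * err_scale (u n) n d)"
    by blast
  define x where "x = exp lam0 - 1"
  define c where "c = real (m + Suc d)"
  define Z where "Z = \<bar>x\<bar> * ((m + d) choose m) * \<tau> ^ d + K'"
  define K where "K = 2 * c * \<tau> * Z + (2 * c * \<tau> * (1 + \<tau>) * Z + 8 * c\<^sup>2 * \<tau>\<^sup>2 * Z\<^sup>2)
    + \<bar>x\<bar> * ((m + Suc d) choose m) * (Suc d choose 2) * \<tau> ^ d"
  have "0 \<le> K"
    unfolding K_def Z_def c_def using \<open>0 \<le> K'\<close> assms(1) by simp
  have "\<forall>\<^sub>F n in sequentially. 1 \<le> u n"
    using assms(2) by (simp add: filterlim_at_top)
  moreover have "\<forall>\<^sub>F n in sequentially. 2 * (1 + \<tau>) * u n \<le> n"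
    using assms(3) by (rule eventually_mult_le_of_nat)
  moreover have "\<forall>\<^sub>F n in sequentially. 4 * c * Z * \<tau> * u n \<le> n"
    using assms(3) by (rule eventually_mult_le_of_nat)
  moreover have "\<forall>\<^sub>F n in sequentially. 2 * c \<le> real n"
    using eventually_ge_at_top[of "nat \<lceil>2 * c\<rceil>"] by eventually_elim linarith
  ultimately have "\<forall>\<^sub>F n in sequentially. \<forall>t. real t \<le> \<tau> * u n \<longrightarrow> (\<forall>s\<le>t.
      \<bar>exp (lam m lam0 (real n - u n) t s (m + Suc d)) - 1
         - x * ((m + Suc d) choose m) * (s / n) ^ Suc d\<bar> \<le> K * err_scale (u n) n (Suc d))"
    using prev
  proof eventually_elim
    case (elim n)
    then show ?case
      unfolding K_def Z_def c_def x_def using \<open>0 \<le> K'\<close> assms(1)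
      by (intro allI impI exp_lam_level_bound) (simp_all add: Z_def c_def x_def)
  qed
  then show ?case
    using \<open>0 \<le> K\<close> unfolding x_def by blast
qed

lemma exp_lam_approx_uniform:
  fixes m D :: nat and lam0 \<tau> :: real and u :: "nat \<Rightarrow> real"
  assumes "0 < \<tau>" "filterlim u at_top sequentially" "(\<lambda>n. u n / real n) \<longlonglongrightarrow> 0"
  shows "\<exists>C. \<forall>\<^sub>F n in sequentially. \<forall>t. real t \<le> \<tau> * u n \<longrightarrow> (\<forall>j\<in>{m..m + D}.
           \<bar>exp (lam m lam0 (real n - u n) t t j)
              - (1 + real (j choose m) * (real t / real n) ^ (j - m) * (exp lam0 - 1))\<bar>
           \<le> C * err_scale (u n) n (j - m))"
proof -
  have "\<forall>d. \<exists>K. 0 \<le> K \<and> (\<forall>\<^sub>F n in sequentially.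
      \<forall>t. real t \<le> \<tau> * u n \<longrightarrow> (\<forall>s\<le>t. \<bar>exp (lam m lam0 (real n - u n) t s (m + d)) - 1
         - (exp lam0 - 1) * ((m + d) choose m) * (s / n) ^ d\<bar> \<le> K * err_scale (u n) n d))"
    using exp_lam_approx[OF assms] by blast
  from choice[OF this] obtain K where K: "\<forall>d. 0 \<le> K d \<and> (\<forall>\<^sub>F n in sequentially.
      \<forall>t. real t \<le> \<tau> * u n \<longrightarrow> (\<forall>s\<le>t. \<bar>exp (lam m lam0 (real n - u n) t s (m + d)) - 1
         - (exp lam0 - 1) * ((m + d) choose m) * (s / n) ^ d\<bar> \<le> K d * err_scale (u n) n d))" ..
  have "\<forall>\<^sub>F n in sequentially. \<forall>d\<in>{..D}. \<forall>t. real t \<le> \<tau> * u n \<longrightarrow>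
      (\<forall>s\<le>t. \<bar>exp (lam m lam0 (real n - u n) t s (m + d)) - 1
         - (exp lam0 - 1) * ((m + d) choose m) * (s / n) ^ d\<bar> \<le> K d * err_scale (u n) n d)"
    using K by (intro eventually_ball_finite) auto
  then show ?thesis
  proof (intro exI[of _ "\<Sum>d\<le>D. K d"], elim eventually_mono, intro allI impI ballI)
    fix n t j
    assume bound: "\<forall>d\<in>{..D}. \<forall>t. real t \<le> \<tau> * u n \<longrightarrow>
      (\<forall>s\<le>t. \<bar>exp (lam m lam0 (real n - u n) t s (m + d)) - 1
         - (exp lam0 - 1) * ((m + d) choose m) * (s / n) ^ d\<bar> \<le> K d * err_scale (u n) n d)"
      and "real t \<le> \<tau> * u n" and "j \<in> {m..m + D}"
    define d where "d = j - m"
    have "j = m + d" "d \<le> D"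
      using \<open>j \<in> {m..m + D}\<close> unfolding d_def by auto
    with bound \<open>real t \<le> \<tau> * u n\<close> have "\<bar>exp (lam m lam0 (real n - u n) t t (m + d)) - 1
        - (exp lam0 - 1) * ((m + d) choose m) * (t / n) ^ d\<bar> \<le> K d * err_scale (u n) n d"
      by blast
    also have "\<dots> \<le> (\<Sum>d\<le>D. K d) * err_scale (u n) n d"
      using \<open>d \<le> D\<close> K by (intro mult_right_mono member_le_sum err_scale_nonneg) auto
    finally show "\<bar>exp (lam m lam0 (real n - u n) t t j)
        - (1 + real (j choose m) * (real t / real n) ^ (j - m) * (exp lam0 - 1))\<bar>
      \<le> (\<Sum>d\<le>D. K d) * err_scale (u n) n (j - m)"
      using \<open>j = m + d\<close> by (simp add: algebra_simps)
  qed
qed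

theorem mainTheorem10:
  fixes k r :: nat and lam0 \<tau> :: real and u :: "nat \<Rightarrow> real"
  assumes "2 \<le> r" "r \<le> k" "\<tau> > 0"
    and "filterlim u at_top sequentially"
    and "(\<lambda>n. u n / real n) \<longlonglongrightarrow> 0"
  shows "\<exists>C. \<forall>\<^sub>F n in sequentially. \<forall>t::nat. real t \<le> \<tau> * u n \<longrightarrow>
           (\<forall>j\<in>{k - r + 1..k}.
              \<bar>exp (lam (k - r + 1) lam0 (real n - u n) t t j)
                - (1 + real (j choose (k - r + 1)) * (real t / real n) ^ (j - (k - r + 1))
                       * (exp lam0 - 1))\<bar>
              \<le> C * (u n powr (real j - real (k - r + 1) - 1) / real n ^ (j - (k - r + 1))
                       * max 1 (u n ^ 2 / real n)))"
proof -
  define m where "m = k - r + 1"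
  obtain C where "\<forall>\<^sub>F n in sequentially. \<forall>t. real t \<le> \<tau> * u n \<longrightarrow> (\<forall>j\<in>{m..m + k}.
      \<bar>exp (lam m lam0 (real n - u n) t t j)
         - (1 + real (j choose m) * (real t / real n) ^ (j - m) * (exp lam0 - 1))\<bar>
      \<le> C * err_scale (u n) n (j - m))"
    using exp_lam_approx_uniform[OF assms(3-5)] by blast
  then show ?thesis
    unfolding m_def[symmetric]
    by (intro exI[of _ C]) (auto elim!: eventually_mono simp: err_scale_def of_nat_diff)
qed

end
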